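(* Let $(L,\mathcal P)$, $\mathcal P=(P_n)_{n\in\mathbb{N}}$, be an $x$–$y$ grain line in a graph $G$, let $\ell_1,\ell_2\in L$ with $\ell_1<_L\ell_2$, and let $N\in\mathbb{N}$ be such that $P_N$ grains $\{\ell_1,\ell_2\}$. Then $([\ell_1,\ell_2]_L,(\ell_1P_n\ell_2)_{n\ge N})$, with $[\ell_1,\ell_2]_L$ carrying the restriction of $\le_L$, is an $\ell_1$–$\ell_2$ grain line in $G$; moreover, it is wildly presented if $(L,\mathcal P)$ is wildly presented.
   Context: Graphs are simple and may be infinite; $\mathbb{N}=\{0,1,2,\dots\}$. An $a$–$b$ path $P$ induces the linear order $\le_P$ of traversal from $a$ to $b$ on $V(P)$; for vertices $s,t$ on $P$, $sPt$ denotes the subpath of $P$ between them. For distinct vertices $a,b$ and $M\in\mathbb{N}$, an $a$–$b$ grain line in $G$ (indexed from $M$) is a pair $(L,\mathcal P)$ where $L\subseteq V(G)$ is a countable set with a linear order $\le_L$ having least element $a$ and greatest element $b$, and $\mathcal P=(P_n)_{n\ge M}$ is a sequence of pairwise edge-disjoint $a$–$b$ paths in $G$, such that: (GL1) $L$ is exactly the set of vertices $v$ for which $\{n\ge M: v\in V(P_n)\}$ is a non-empty final segment $\{n:n\ge m\}$ of $\{n\in\mathbb{N}:n\ge M\}$; (GL2) if a vertex of $P_n$ is not in $L$, it lies on no $P_m$ with $m\ne n$; (GL3) for every $n\ge M$, $\le_{P_n}$ and $\le_L$ induce the same linear order on $L_{<n}:=L\cap\bigcup_{M\le k<n}V(P_k)$.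 Interval notation: $[\ell,\ell']_L=\{\ell''\in L:\ell\le_L\ell''\le_L\ell'\}$, $(\ell,\ell')_L$ the corresponding open interval. A path $P_n$ grains a vertex set $U$ if for every $m\ge n$ we have $V(P_m)\cap U=L\cap U$ and $\le_{P_m}$ and $\le_L$ induce the same linear order on this set. A grain line is wildly presented if for every $n$ and all $\ell<_L\ell'$ in $L_{<n}$, the subpath $\ell P_n\ell'$ has a vertex in $(\ell,\ell')_L$. *)

theory Defs
  imports Main "HOL-Library.Countable_Set"
begin

definition simple_graph :: "'a set \<Rightarrow> ('a \<Rightarrow> 'a \<Rightarrow> bool) \<Rightarrow> bool" where
  "simple_graph V E \<longleftrightarrow> (\<forall>u v. E u v \<longrightarrow> E v u \<and> u \<noteq> v \<and> u \<in> V \<and> v \<in> V)"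

definition is_path :: "'a set \<Rightarrow> ('a \<Rightarrow> 'a \<Rightarrow> bool) \<Rightarrow> 'a list \<Rightarrow> bool" where
  "is_path V E P \<longleftrightarrow> P \<noteq> [] \<and> distinct P \<and> set P \<subseteq> V \<and>
     (\<forall>i. Suc i < length P \<longrightarrow> E (P ! i) (P ! Suc i))"

definition ab_path :: "'a set \<Rightarrow> ('a \<Rightarrow> 'a \<Rightarrow> bool) \<Rightarrow> 'a \<Rightarrow> 'a \<Rightarrow> 'a list \<Rightarrow> bool" where
  "ab_path V E a b P \<longleftrightarrow> is_path V E P \<and> hd P = a \<and> last P = b"

definition path_edges :: "'a list \<Rightarrow> 'a set set" where
  "path_edges P = {{P ! i, P ! Suc i} | i. Suc i < length P}"

text \<open>Position of a vertex on a path (meaningful for vertices on the path).\<close>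
definition index :: "'a list \<Rightarrow> 'a \<Rightarrow> nat" where
  "index P u = (LEAST i. i < length P \<and> P ! i = u)"

definition path_le :: "'a list \<Rightarrow> 'a \<Rightarrow> 'a \<Rightarrow> bool" where
  "path_le P u v \<longleftrightarrow> u \<in> set P \<and> v \<in> set P \<and> index P u \<le> index P v"

definition subpath :: "'a list \<Rightarrow> 'a \<Rightarrow> 'a \<Rightarrow> 'a list" where
  "subpath P s t =
     (if index P s \<le> index P t then drop (index P s) (take (Suc (index P t)) P)
      else rev (drop (index P t) (take (Suc (index P s)) P)))"

definition same_order_on :: "'a set \<Rightarrow> 'a rel \<Rightarrow> 'a list \<Rightarrow> bool" where
  "same_order_on S r P \<longleftrightarrow> (\<forall>u\<in>S. \<forall>v\<in>S. (u, v) \<in> r \<longleftrightarrow> path_le P u v)"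

definition L_below :: "'a set \<Rightarrow> nat \<Rightarrow> (nat \<Rightarrow> 'a list) \<Rightarrow> nat \<Rightarrow> 'a set" where
  "L_below L M P n = L \<inter> (\<Union>k\<in>{M..<n}. set (P k))"

definition closed_interval :: "'a set \<Rightarrow> 'a rel \<Rightarrow> 'a \<Rightarrow> 'a \<Rightarrow> 'a set" where
  "closed_interval L r l l' = {x \<in> L. (l, x) \<in> r \<and> (x, l') \<in> r}"

definition open_interval :: "'a set \<Rightarrow> 'a rel \<Rightarrow> 'a \<Rightarrow> 'a \<Rightarrow> 'a set" where
  "open_interval L r l l' = {x \<in> L. (l, x) \<in> r \<and> x \<noteq> l \<and> (x, l') \<in> r \<and> x \<noteq> l'}"

definition grain_line ::
  "'a set \<Rightarrow> ('a \<Rightarrow> 'a \<Rightarrow> bool) \<Rightarrow> 'a \<Rightarrow> 'a \<Rightarrow> 'a set \<Rightarrow> 'a rel \<Rightarrow> nat \<Rightarrow> (nat \<Rightarrow> 'a list) \<Rightarrow> bool" where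
  "grain_line V E a b L r M P \<longleftrightarrow>
     a \<noteq> b \<and> L \<subseteq> V \<and> countable L \<and>
     r \<subseteq> L \<times> L \<and> linear_order_on L r \<and>
     a \<in> L \<and> b \<in> L \<and> (\<forall>x\<in>L. (a, x) \<in> r \<and> (x, b) \<in> r) \<and>
     (\<forall>n\<ge>M. ab_path V E a b (P n)) \<and>
     (\<forall>m\<ge>M. \<forall>n\<ge>M. m \<noteq> n \<longrightarrow> path_edges (P m) \<inter> path_edges (P n) = {}) \<and>
     \<comment> \<open>GL1\<close>
     L = {v. \<exists>m\<ge>M. {n. n \<ge> M \<and> v \<in> set (P n)} = {m..}} \<and>
     \<comment> \<open>GL2\<close>
     (\<forall>n\<ge>M. \<forall>v\<in>set (P n). v \<notin> L \<longrightarrow> (\<forall>m\<ge>M. m \<noteq> n \<longrightarrow> v \<notin> set (P m))) \<and>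
     \<comment> \<open>GL3\<close>
     (\<forall>n\<ge>M. same_order_on (L_below L M P n) r (P n))"

definition grains :: "'a set \<Rightarrow> 'a rel \<Rightarrow> (nat \<Rightarrow> 'a list) \<Rightarrow> nat \<Rightarrow> 'a set \<Rightarrow> bool" where
  "grains L r P n U \<longleftrightarrow>
     (\<forall>m\<ge>n. set (P m) \<inter> U = L \<inter> U \<and> same_order_on (L \<inter> U) r (P m))"

definition wildly_presented :: "'a set \<Rightarrow> 'a rel \<Rightarrow> nat \<Rightarrow> (nat \<Rightarrow> 'a list) \<Rightarrow> bool" where
  "wildly_presented L r M P \<longleftrightarrow>
     (\<forall>n\<ge>M. \<forall>l\<in>L_below L M P n. \<forall>l'\<in>L_below L M P n. (l, l') \<in> r \<and> l \<noteq> l' \<longrightarrow>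
        (\<exists>v\<in>set (subpath (P n) l l'). v \<in> open_interval L r l l'))"

end

theory Submission
  imports Defs
begin

(* Once P_N grains {l1, l2}, every later path P_n runs through l1 before l2, so the segments
   l1 P_n l2 are paths, and pairwise edge-disjoint because the P_n are.  A vertex v of L that
   already lies on some P_k with k < n is, by GL3, traversed by P_n in the order of L together
   with l1 and l2; hence v lies on l1 P_n l2 iff l1 <= v <= l2.  This yields GL1-GL3 for the
   interval, and wildness is inherited because l P_n l' is a subpath of l1 P_n l2 whenever l and
   l' lie on it. *)
lemma
  assumes "u \<in> set P"
  shows index_less_length: "index P u < length P" and nth_index: "P ! index P u = u"
proof -
  have "\<exists>k. k < length P \<and> P ! k = u" using assms by (auto simp: in_set_conv_nth)
  from LeastI_ex[OF this] show "index P u < length P" "P ! index P u = u"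
    unfolding index_def by auto
qed

lemma index_nth:
  assumes "distinct P" and "k < length P"
  shows "index P (P ! k) = k"
  unfolding index_def
proof (rule Least_equality)
  show "k < length P \<and> P ! k = P ! k" using assms(2) by simp
next
  fix i assume "i < length P \<and> P ! i = P ! k"
  then show "k \<le> i" using assms nth_eq_iff_index_eq by fastforce
qed

lemma linear_order_on_restrict:
  assumes "linear_order_on L r" and "L' \<subseteq> L"
  shows "linear_order_on L' (r \<inter> (L' \<times> L'))"
  using assms unfolding order_on_defs refl_on_def trans_def antisym_def total_on_def by blast

lemma open_interval_subset_closed_interval:
  assumes "trans r" and "l \<in> closed_interval L r a b" and "l' \<in> closed_interval L r a b"
  shows "open_interval L r l l' \<subseteq> closed_interval L r a b"
  using assms unfolding closed_interval_def open_interval_def trans_def by blast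

lemma open_interval_restrict:
  assumes "L' \<subseteq> L" and "l \<in> L'" and "l' \<in> L'"
  shows "open_interval L' (r \<inter> (L' \<times> L')) l l' = open_interval L r l l' \<inter> L'"
  using assms unfolding open_interval_def by blast

lemma final_segment_between:
  fixes S :: "nat set"
  assumes "{K<..} \<subseteq> S" and "S \<subseteq> {K..}"
  shows "\<exists>m\<in>{K, Suc K}. S = {m..}"
proof (cases "K \<in> S")
  case True
  then have "S = {K..}" using assms by (auto simp: subset_eq order_le_less)
  then show ?thesis by blast
next
  case False
  then have "S = {Suc K..}" using assms by (fastforce simp: subset_eq Suc_le_eq order_le_less)
  then show ?thesis by blast
qed

context
  fixes P :: "'a list" and s t :: 'a
  assumes distinct_P: "distinct P" and s_before_t: "path_le P s t"
begin

lemma subpath_conv_drop_take: "subpath P s t = drop (index P s) (take (Suc (index P t)) P)"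
  using s_before_t by (simp add: subpath_def path_le_def)

lemma length_subpath: "length (subpath P s t) = Suc (index P t) - index P s"
  using s_before_t index_less_length[of t P] by (simp add: subpath_conv_drop_take path_le_def)

lemma nth_subpath: "k < length (subpath P s t) \<Longrightarrow> subpath P s t ! k = P ! (index P s + k)"
  using length_subpath by (simp add: subpath_conv_drop_take)

lemma distinct_subpath: "distinct (subpath P s t)"
  using distinct_P by (simp add: subpath_conv_drop_take)

lemma set_subpath: "set (subpath P s t) = {u. path_le P s u \<and> path_le P u t}"
proof (intro set_eqI iffI)
  fix u assume "u \<in> set (subpath P s t)"
  then obtain k where k: "k < length (subpath P s t)" and u: "u = P ! (index P s + k)"
    by (auto simp: in_set_conv_nth nth_subpath)
  have "index P s + k < length P"
    using k s_before_t index_less_length[of t P] by (simp add: length_subpath path_le_def)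
  then show "u \<in> {u. path_le P s u \<and> path_le P u t}"
    using k u s_before_t index_nth[OF distinct_P] by (auto simp: length_subpath path_le_def)
next
  fix u assume "u \<in> {u. path_le P s u \<and> path_le P u t}"
  then have u: "u \<in> set P" "index P s \<le> index P u" "index P u \<le> index P t"
    by (auto simp: path_le_def)
  define k where "k = index P u - index P s"
  have k: "k < length (subpath P s t)" using u by (simp add: k_def length_subpath)
  have "subpath P s t ! k = u" using nth_subpath[OF k] u nth_index by (simp add: k_def)
  then show "u \<in> set (subpath P s t)" using k nth_mem by metis
qed

lemma set_subpath_subset: "set (subpath P s t) \<subseteq> set P"
  by (auto simp: set_subpath path_le_def)

lemma index_subpath:
  assumes "u \<in> set (subpath P s t)"
  shows "index (subpath P s t) u = index P u - index P s"
proof -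
  have u: "u \<in> set P" "index P s \<le> index P u" "index P u \<le> index P t"
    using assms by (auto simp: set_subpath path_le_def)
  define k where "k = index P u - index P s"
  have k: "k < length (subpath P s t)" using u by (simp add: k_def length_subpath)
  have "subpath P s t ! k = u" using nth_subpath[OF k] u nth_index by (simp add: k_def)
  then show ?thesis using index_nth[OF distinct_subpath k] by (simp add: k_def)
qed

lemma path_le_subpath_iff:
  "path_le (subpath P s t) u w \<longleftrightarrow>
     u \<in> set (subpath P s t) \<and> w \<in> set (subpath P s t) \<and> path_le P u w"
  using index_subpath by (auto simp: path_le_def set_subpath)

lemma subpath_nonempty: "subpath P s t \<noteq> []"
  using length_subpath s_before_t by (auto simp: path_le_def)

lemma hd_subpath: "hd (subpath P s t) = s"
  using nth_subpath[of 0] subpath_nonempty s_before_t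
  by (simp add: hd_conv_nth path_le_def nth_index)

lemma last_subpath: "last (subpath P s t) = t"
  using nth_subpath[of "length (subpath P s t) - 1"] subpath_nonempty length_subpath s_before_t
  by (simp add: last_conv_nth path_le_def nth_index Suc_diff_le)

lemma is_path_subpath: "is_path V E P \<Longrightarrow> is_path V E (subpath P s t)"
  using subpath_nonempty distinct_subpath set_subpath_subset nth_subpath length_subpath
    index_less_length[of t P] s_before_t
  unfolding is_path_def path_le_def by (auto simp: Suc_diff_le)

lemma ab_path_subpath: "is_path V E P \<Longrightarrow> ab_path V E s t (subpath P s t)"
  by (simp add: ab_path_def is_path_subpath hd_subpath last_subpath)

lemma path_edges_subpath: "path_edges (subpath P s t) \<subseteq> path_edges P"
proof
  fix e assume "e \<in> path_edges (subpath P s t)"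
  then obtain k where k: "Suc k < length (subpath P s t)"
    and e: "e = {P ! (index P s + k), P ! Suc (index P s + k)}"
    unfolding path_edges_def using nth_subpath by auto
  have "Suc (index P s + k) < length P"
    using k length_subpath index_less_length[of t P] s_before_t by (auto simp: path_le_def)
  then show "e \<in> path_edges P" unfolding path_edges_def e by blast
qed

lemma subpath_subpath:
  assumes "u \<in> set (subpath P s t)" and "w \<in> set (subpath P s t)"
  shows "subpath (subpath P s t) u w = subpath P u w"
proof -
  let ?i = "index P s" and ?j = "index P t"
  have segment: "drop (a - ?i) (take (Suc b - ?i) (subpath P s t)) = drop a (take (Suc b) P)"
    if "?i \<le> a" "?i \<le> b" "b \<le> ?j" for a b
    using that by (simp add: subpath_conv_drop_take take_drop min_def)
  have "?i \<le> index P u" "index P u \<le> ?j" "?i \<le> index P w" "index P w \<le> ?j"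
    using assms by (auto simp: set_subpath path_le_def)
  then show ?thesis
    using segment[of "index P u" "index P w"] segment[of "index P w" "index P u"]
    unfolding subpath_def[of "subpath P s t"] subpath_def[of P u w]
      index_subpath[OF assms(1)] index_subpath[OF assms(2)]
    by (auto simp: Suc_diff_le)
qed

end

lemma mem_L_belowI:
  "u \<in> L \<Longrightarrow> u \<in> set (P k) \<Longrightarrow> M \<le> k \<Longrightarrow> k < n \<Longrightarrow> u \<in> L_below L M P n"
  unfolding L_below_def by auto

context
  fixes V :: "'a set" and E :: "'a \<Rightarrow> 'a \<Rightarrow> bool" and a b :: 'a
    and L :: "'a set" and r :: "'a rel" and M :: nat and P :: "nat \<Rightarrow> 'a list"
  assumes grain_line: "grain_line V E a b L r M P"
begin

lemma grain_line_is_path: "M \<le> n \<Longrightarrow> is_path V E (P n)"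
  using grain_line by (simp add: grain_line_def ab_path_def)

lemma grain_line_distinct: "M \<le> n \<Longrightarrow> distinct (P n)"
  using grain_line_is_path by (simp add: is_path_def)

lemma grain_line_edge_disjoint:
  "M \<le> m \<Longrightarrow> M \<le> n \<Longrightarrow> m \<noteq> n \<Longrightarrow> path_edges (P m) \<inter> path_edges (P n) = {}"
  using grain_line by (simp add: grain_line_def)

lemma grain_line_linear_order: "linear_order_on L r"
  using grain_line unfolding grain_line_def by (elim conjE)

lemma grain_line_subset: "L \<subseteq> V"
  using grain_line unfolding grain_line_def by (elim conjE)

lemma grain_line_countable: "countable L"
  using grain_line unfolding grain_line_def by (elim conjE)

lemma grain_line_final_segment: "v \<in> L \<Longrightarrow> \<exists>m\<ge>M. \<forall>n\<ge>M. v \<in> set (P n) \<longleftrightarrow> m \<le> n"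
  using grain_line unfolding grain_line_def by (smt (verit) atLeast_iff mem_Collect_eq)

lemma grain_line_shared_vertex:
  "v \<in> set (P m) \<Longrightarrow> v \<in> set (P n) \<Longrightarrow> M \<le> m \<Longrightarrow> M \<le> n \<Longrightarrow> m \<noteq> n \<Longrightarrow> v \<in> L"
  using grain_line unfolding grain_line_def by blast

lemma grain_line_order_iff_path_le:
  "M \<le> n \<Longrightarrow> u \<in> L_below L M P n \<Longrightarrow> w \<in> L_below L M P n \<Longrightarrow> (u, w) \<in> r \<longleftrightarrow> path_le (P n) u w"
  using grain_line unfolding grain_line_def same_order_on_def by blast

lemma mem_subpath_iff_between:
  assumes "M \<le> n" and "u \<in> L_below L M P n" and "v \<in> L_below L M P n" and "w \<in> L_below L M P n"
    and "(u, w) \<in> r"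
  shows "v \<in> set (subpath (P n) u w) \<longleftrightarrow> (u, v) \<in> r \<and> (v, w) \<in> r"
  using assms grain_line_order_iff_path_le set_subpath[OF grain_line_distinct] by simp

end

context
  fixes V :: "'a set" and E :: "'a \<Rightarrow> 'a \<Rightarrow> bool" and a b :: 'a
    and L :: "'a set" and r :: "'a rel" and M :: nat and P :: "nat \<Rightarrow> 'a list"
    and l1 l2 :: 'a and N :: nat
  assumes grain_line: "grain_line V E a b L r M P"
    and l1_in_L: "l1 \<in> L" and l2_in_L: "l2 \<in> L" and l1_le_l2: "(l1, l2) \<in> r"
    and l1_ne_l2: "l1 \<noteq> l2"
    and grains: "grains L r P N {l1, l2}"
    and M_le_N: "M \<le> N"
begin

abbreviation interval :: "'a set" where
  "interval \<equiv> closed_interval L r l1 l2"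

abbreviation interval_order :: "'a rel" where
  "interval_order \<equiv> r \<inter> (interval \<times> interval)"

abbreviation segment :: "nat \<Rightarrow> 'a list" where
  "segment n \<equiv> subpath (P n) l1 l2"

lemma l1_l2_on_path: "N \<le> n \<Longrightarrow> l1 \<in> set (P n) \<and> l2 \<in> set (P n)"
  using grains l1_in_L l2_in_L unfolding grains_def by blast

lemma path_le_l1_l2: "N \<le> n \<Longrightarrow> path_le (P n) l1 l2"
  using grains l1_in_L l2_in_L l1_le_l2 unfolding grains_def same_order_on_def by blast

lemma path_distinct: "N \<le> n \<Longrightarrow> distinct (P n)"
  using grain_line_distinct[OF grain_line] M_le_N by simp

lemma set_segment_subset: "N \<le> n \<Longrightarrow> set (segment n) \<subseteq> set (P n)"
  using set_subpath_subset[OF path_distinct path_le_l1_l2] by simp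

lemma interval_subset: "interval \<subseteq> L"
  by (auto simp: closed_interval_def)

lemma l1_l2_in_interval: "l1 \<in> interval" "l2 \<in> interval"
  using grain_line_linear_order[OF grain_line] l1_in_L l2_in_L l1_le_l2
  by (auto simp: closed_interval_def order_on_defs refl_on_def)

lemma mem_segment_iff_mem_interval:
  assumes "v \<in> L" and "v \<in> set (P k)" and "M \<le> k" and "k < n" and "N < n"
  shows "v \<in> set (segment n) \<longleftrightarrow> v \<in> interval"
proof -
  have "M \<le> n" using \<open>M \<le> k\<close> \<open>k < n\<close> by simp
  have "l1 \<in> L_below L M P n" and "l2 \<in> L_below L M P n"
    using mem_L_belowI[of _ L P N M n] l1_in_L l2_in_L l1_l2_on_path[of N] M_le_N \<open>N < n\<close>
    by simp_all
  moreover have "v \<in> L_below L M P n" using mem_L_belowI[of v L P k M n] assms by simp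
  ultimately have "v \<in> set (segment n) \<longleftrightarrow> (l1, v) \<in> r \<and> (v, l2) \<in> r"
    using mem_subpath_iff_between[OF grain_line \<open>M \<le> n\<close> _ _ _ l1_le_l2] by simp
  then show ?thesis using \<open>v \<in> L\<close> by (simp add: closed_interval_def)
qed

lemma segment_L_below:
  assumes "N \<le> n" and "u \<in> L_below interval N segment n"
  shows "u \<in> interval" and "u \<in> set (segment n)" and "u \<in> L_below L M P n"
proof -
  obtain k where u: "u \<in> interval" "u \<in> set (segment k)" and k: "N \<le> k" "k < n"
    using assms(2) by (auto simp: L_below_def)
  have "u \<in> L" using u(1) by (simp add: closed_interval_def)
  moreover have "u \<in> set (P k)" using set_segment_subset[OF k(1)] u(2) by blast
  ultimately show "u \<in> interval" and "u \<in> set (segment n)" and "u \<in> L_below L M P n"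
    using u(1) mem_segment_iff_mem_interval[of u k n] mem_L_belowI[of u L P k M n] k M_le_N
    by simp_all
qed

lemma interval_vertex_eventually_on_segments:
  assumes v: "v \<in> interval"
  shows "\<exists>m\<ge>N. {n. n \<ge> N \<and> v \<in> set (segment n)} = {m..}"
proof -
  have "v \<in> L" using v by (simp add: closed_interval_def)
  then obtain m0 where m0: "M \<le> m0" "\<And>n. M \<le> n \<Longrightarrow> v \<in> set (P n) \<longleftrightarrow> m0 \<le> n"
    using grain_line_final_segment[OF grain_line] by blast
  define K where "K = max m0 N"
  have "\<exists>m\<in>{K, Suc K}. {n. n \<ge> N \<and> v \<in> set (segment n)} = {m..}"
  proof (rule final_segment_between)
    show "{K<..} \<subseteq> {n. n \<ge> N \<and> v \<in> set (segment n)}"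
    proof
      fix n assume "n \<in> {K<..}"
      then have "m0 < n" and "N < n" by (auto simp: K_def)
      moreover have "v \<in> set (P m0)" using m0 by simp
      ultimately show "n \<in> {n. n \<ge> N \<and> v \<in> set (segment n)}"
        using mem_segment_iff_mem_interval[OF \<open>v \<in> L\<close> _ m0(1)] v by simp
    qed
    show "{n. n \<ge> N \<and> v \<in> set (segment n)} \<subseteq> {K..}"
    proof
      fix n assume n: "n \<in> {n. n \<ge> N \<and> v \<in> set (segment n)}"
      then have "v \<in> set (P n)" using set_segment_subset by auto
      then have "m0 \<le> n" using m0(2) n M_le_N by simp
      then show "n \<in> {K..}" using n by (simp add: K_def)
    qed
  qed
  moreover have "N \<le> K" by (simp add: K_def)
  ultimately show ?thesis by auto
qed

lemma eventually_on_segments_in_interval: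
  assumes "N \<le> m" and "\<And>n. m \<le> n \<Longrightarrow> v \<in> set (segment n)"
  shows "v \<in> interval"
proof -
  have "v \<in> set (P m)" "v \<in> set (P (Suc m))"
    using assms set_segment_subset[of m] set_segment_subset[of "Suc m"] by auto
  then have "v \<in> L" using grain_line_shared_vertex[OF grain_line] assms(1) M_le_N by simp
  then show "v \<in> interval"
    using mem_segment_iff_mem_interval[of v m "Suc m"] \<open>v \<in> set (P m)\<close> assms M_le_N by simp
qed

lemma interval_eq_persistent_vertices:
  "interval = {v. \<exists>m\<ge>N. {n. n \<ge> N \<and> v \<in> set (segment n)} = {m..}}"
proof (intro equalityI subsetI CollectI)
  fix v assume "v \<in> interval"
  then show "\<exists>m\<ge>N. {n. n \<ge> N \<and> v \<in> set (segment n)} = {m..}"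
    by (rule interval_vertex_eventually_on_segments)
next
  fix v assume "v \<in> {v. \<exists>m\<ge>N. {n. n \<ge> N \<and> v \<in> set (segment n)} = {m..}}"
  then obtain m where "N \<le> m" and "{n. n \<ge> N \<and> v \<in> set (segment n)} = {m..}" by blast
  then show "v \<in> interval" using eventually_on_segments_in_interval[of m v] by auto
qed

lemma shared_segment_vertex_in_interval:
  assumes "v \<in> set (segment m)" and "v \<in> set (segment n)" and "N \<le> m" and "m < n"
  shows "v \<in> interval"
proof -
  have "v \<in> set (P m)" and "v \<in> set (P n)"
    using assms set_segment_subset[of m] set_segment_subset[of n] by auto
  then have "v \<in> L" using grain_line_shared_vertex[OF grain_line, of v m n] assms M_le_N by simp
  then show ?thesis
    using mem_segment_iff_mem_interval[of v m n] \<open>v \<in> set (P m)\<close> assms M_le_N by simp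
qed

lemma segment_same_order:
  assumes "N \<le> n"
  shows "same_order_on (L_below interval N segment n) interval_order (segment n)"
  unfolding same_order_on_def
proof (intro ballI)
  fix u w assume u: "u \<in> L_below interval N segment n" and w: "w \<in> L_below interval N segment n"
  note u_on = segment_L_below[OF assms u] and w_on = segment_L_below[OF assms w]
  have "(u, w) \<in> interval_order \<longleftrightarrow> (u, w) \<in> r" using u_on(1) w_on(1) by simp
  also have "\<dots> \<longleftrightarrow> path_le (P n) u w"
    using grain_line_order_iff_path_le[OF grain_line _ u_on(3) w_on(3)] assms M_le_N by simp
  also have "\<dots> \<longleftrightarrow> path_le (segment n) u w"
    using path_le_subpath_iff[OF path_distinct[OF assms] path_le_l1_l2[OF assms]] u_on(2) w_on(2)
    by simp
  finally show "(u, w) \<in> interval_order \<longleftrightarrow> path_le (segment n) u w" .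
qed

theorem grain_line_segment: "grain_line V E l1 l2 interval interval_order N segment"
  unfolding grain_line_def
proof (intro conjI)
  show "l1 \<noteq> l2" by (fact l1_ne_l2)
  show "interval \<subseteq> V" using interval_subset grain_line_subset[OF grain_line] by blast
  show "countable interval"
    using countable_subset[OF interval_subset grain_line_countable[OF grain_line]] .
  show "interval_order \<subseteq> interval \<times> interval" by blast
  show "linear_order_on interval interval_order"
    using linear_order_on_restrict grain_line_linear_order[OF grain_line] interval_subset by blast
  show "l1 \<in> interval" "l2 \<in> interval" by (fact l1_l2_in_interval)+
  show "\<forall>v\<in>interval. (l1, v) \<in> interval_order \<and> (v, l2) \<in> interval_order"
    using l1_l2_in_interval by (auto simp: closed_interval_def)
  show "\<forall>n\<ge>N. ab_path V E l1 l2 (segment n)"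
    using ab_path_subpath[OF path_distinct path_le_l1_l2] grain_line_is_path[OF grain_line] M_le_N
    by simp
  show "\<forall>m\<ge>N. \<forall>n\<ge>N. m \<noteq> n \<longrightarrow> path_edges (segment m) \<inter> path_edges (segment n) = {}"
  proof (intro allI impI)
    fix m n assume "N \<le> m" and "N \<le> n" and "m \<noteq> n"
    then have "path_edges (P m) \<inter> path_edges (P n) = {}"
      using grain_line_edge_disjoint[OF grain_line] M_le_N by simp
    then show "path_edges (segment m) \<inter> path_edges (segment n) = {}"
      using path_edges_subpath[OF path_distinct[OF \<open>N \<le> m\<close>] path_le_l1_l2[OF \<open>N \<le> m\<close>]]
        path_edges_subpath[OF path_distinct[OF \<open>N \<le> n\<close>] path_le_l1_l2[OF \<open>N \<le> n\<close>]]
      by blast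
  qed
  show "interval = {v. \<exists>m\<ge>N. {n. n \<ge> N \<and> v \<in> set (segment n)} = {m..}}"
    by (fact interval_eq_persistent_vertices)
  show "\<forall>n\<ge>N. \<forall>v\<in>set (segment n). v \<notin> interval \<longrightarrow> (\<forall>m\<ge>N. m \<noteq> n \<longrightarrow> v \<notin> set (segment m))"
    using shared_segment_vertex_in_interval by (metis linorder_neq_iff)
  show "\<forall>n\<ge>N. same_order_on (L_below interval N segment n) interval_order (segment n)"
    using segment_same_order by blast
qed

theorem wildly_presented_segment:
  assumes "wildly_presented L r M P"
  shows "wildly_presented interval interval_order N segment"
  unfolding wildly_presented_def
proof (intro allI impI ballI)
  fix n l l'
  assume n: "N \<le> n" and l: "l \<in> L_below interval N segment n"
    and l': "l' \<in> L_below interval N segment n" and "(l, l') \<in> interval_order \<and> l \<noteq> l'"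
  then have "(l, l') \<in> r" and "l \<noteq> l'" by auto
  note l_on = segment_L_below[OF n l] and l'_on = segment_L_below[OF n l']
  have "\<forall>l\<in>L_below L M P n. \<forall>l'\<in>L_below L M P n. (l, l') \<in> r \<and> l \<noteq> l' \<longrightarrow>
      (\<exists>v\<in>set (subpath (P n) l l'). v \<in> open_interval L r l l')"
    using assms n M_le_N unfolding wildly_presented_def by simp
  then obtain v where v: "v \<in> set (subpath (P n) l l')" "v \<in> open_interval L r l l'"
    using l_on(3) l'_on(3) \<open>(l, l') \<in> r\<close> \<open>l \<noteq> l'\<close> by blast
  have "subpath (segment n) l l' = subpath (P n) l l'"
    using subpath_subpath[OF path_distinct[OF n] path_le_l1_l2[OF n] l_on(2) l'_on(2)] .
  moreover have "v \<in> interval"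
    using open_interval_subset_closed_interval[OF _ l_on(1) l'_on(1)] v(2)
      grain_line_linear_order[OF grain_line] by (auto simp: order_on_defs)
  ultimately show "\<exists>v\<in>set (subpath (segment n) l l'). v \<in> open_interval interval interval_order l l'"
    using v open_interval_restrict[OF interval_subset l_on(1) l'_on(1)] by auto
qed

end

theorem lemma5p6:
  fixes V :: "'a set" and E :: "'a \<Rightarrow> 'a \<Rightarrow> bool"
    and x y l1 l2 :: 'a and L :: "'a set" and r :: "'a rel"
    and P :: "nat \<Rightarrow> 'a list" and N :: nat
  assumes "simple_graph V E"
    and "grain_line V E x y L r 0 P"
    and "l1 \<in> L" and "l2 \<in> L" and "(l1, l2) \<in> r" and "l1 \<noteq> l2"
    and "grains L r P N {l1, l2}"
  shows "grain_line V E l1 l2 (closed_interval L r l1 l2)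
           (r \<inter> (closed_interval L r l1 l2 \<times> closed_interval L r l1 l2))
           N (\<lambda>n. subpath (P n) l1 l2)
       \<and> (wildly_presented L r 0 P \<longrightarrow>
           wildly_presented (closed_interval L r l1 l2)
             (r \<inter> (closed_interval L r l1 l2 \<times> closed_interval L r l1 l2))
             N (\<lambda>n. subpath (P n) l1 l2))"
  using grain_line_segment[OF assms(2-7) le0] wildly_presented_segment[OF assms(2-7) le0] by blast

end
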